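(* Let $t\ge1$ and $n=t+1$. The gadget $\mathtt{SecBackSub}$ defined below is $t$-NIo secure with public output $\mathbf{x}$. $\mathtt{SecBackSub}$ takes as input a Boolean sharing $(\mathbf{A}_i)$ of a matrix $\mathbf{A}\in\mathbb{F}_q^{m\times m}$ and a Boolean sharing $(\mathbf{b}_i)$ of $\mathbf{b}\in\mathbb{F}_q^m$ and computes: for $j=m$ down to $2$: $\mathbf{x}[j]:=\mathtt{FullAdd}((\mathbf{b}[j]_i))$; for $k=1,\dots,j-1$: $\mathbf{b}[k]_i:=\mathbf{b}[k]_i+\mathbf{x}[j]\cdot\mathbf{A}[k,j]_i$ for every $i$. Then $\mathbf{x}[1]:=\mathtt{FullAdd}((\mathbf{b}[1]_i))$, and it returns the public vector $\mathbf{x}\in\mathbb{F}_q^m$.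
   Context: A Boolean sharing of $x\in\mathbb{F}_q$ is $(x_1,\dots,x_n)$ with $x=x_1+\cdots+x_n$; vectors and matrices are shared entry-wise; $\mathbf{v}[j]$ and $\mathbf{A}[k,j]$ denote entries. $\mathtt{StrongRefresh}((x_i))$: set $y_i:=x_i$; for $1\le i<j\le n$: sample $r$ uniformly from $\mathbb{F}_q$, set $y_i:=y_i+r$, $y_j:=y_j-r$; return $(y_i)$ (this gadget is free-$t$-SNI). $\mathtt{FullAdd}((y_i))$: $(a_i):=\mathtt{StrongRefresh}((y_i))$ and return $a_1+\cdots+a_n$. Probing model: an adversary may place probes on intermediate values (internal wires) of a gadget. A gadget with public output $b$ and some input sharings is $t$-NIo (non-interference with public outputs) secure if any set of at most $t_1\le t$ probes on its internal wires can be perfectly simulated using $t_1$ shares of each of its input sharings together with the value $b$. *)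

theory Defs
  imports "HOL-Probability.Probability"
begin

text \<open>Conventions (0-based): shares are indexed by i < n, matrix/vector entries by
  k, j < m.  A sharing of the matrix is A :: share => row => col => value,
  a sharing of the vector is b :: share => entry => value.
  The loop "for j = m down to 2 ... then x[1]" becomes the loop over columns
  j = m-1 down to 0 (for column 0 there are no updates, since k < j).\<close>

definition pairs :: "nat \<Rightarrow> (nat \<times> nat) list" where
  "pairs n = concat (map (\<lambda>i. map (\<lambda>i'. (i, i')) [Suc i..<n]) [0..<n])"

definition npairs :: "nat \<Rightarrow> nat" where
  "npairs n = length (pairs n)"

text \<open>State (y_i)_i of StrongRefresh after s loop steps, with randomness r s used at step s.\<close>
primrec rstate :: "(nat \<times> nat) list \<Rightarrow> (nat \<Rightarrow> 'a::ab_group_add) \<Rightarrow> (nat \<Rightarrow> 'a) \<Rightarrow> nat \<Rightarrow> nat \<Rightarrow> 'a" where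
  "rstate ps y r 0 = y"
| "rstate ps y r (Suc s) =
     (let ii = ps ! s; z = rstate ps y r s
      in z(fst ii := z (fst ii) + r s, snd ii := z (snd ii) - r s))"

definition fulladd :: "nat \<Rightarrow> (nat \<Rightarrow> 'a::ab_group_add) \<Rightarrow> (nat \<Rightarrow> 'a) \<Rightarrow> 'a" where
  "fulladd n y r = (\<Sum>i<n. rstate (pairs n) y r (npairs n) i)"

text \<open>Randomness: r (j,s) is the random value of step s of the StrongRefresh inside the
  FullAdd call for column j.  bst m n A b r st is the state of the b-shares after st
  iterations of the outer loop (iteration st processes column j = m-1-st).\<close>
primrec bst :: "nat \<Rightarrow> nat \<Rightarrow> (nat \<Rightarrow> nat \<Rightarrow> nat \<Rightarrow> 'a::field) \<Rightarrow> (nat \<Rightarrow> nat \<Rightarrow> 'a)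
                 \<Rightarrow> (nat \<times> nat \<Rightarrow> 'a) \<Rightarrow> nat \<Rightarrow> (nat \<Rightarrow> nat \<Rightarrow> 'a)" where
  "bst m n A b r 0 = b"
| "bst m n A b r (Suc st) =
     (let j = m - 1 - st; B = bst m n A b r st;
          xj = fulladd n (\<lambda>i. B i j) (\<lambda>s. r (j, s))
      in (\<lambda>i k. if k < j then B i k + xj * A i k j else B i k))"

definition bin :: "nat \<Rightarrow> nat \<Rightarrow> (nat \<Rightarrow> nat \<Rightarrow> nat \<Rightarrow> 'a::field) \<Rightarrow> (nat \<Rightarrow> nat \<Rightarrow> 'a)
                   \<Rightarrow> (nat \<times> nat \<Rightarrow> 'a) \<Rightarrow> nat \<Rightarrow> (nat \<Rightarrow> nat \<Rightarrow> 'a)" where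
  "bin m n A b r j = bst m n A b r (m - 1 - j)"

definition ystate :: "nat \<Rightarrow> nat \<Rightarrow> (nat \<Rightarrow> nat \<Rightarrow> nat \<Rightarrow> 'a::field) \<Rightarrow> (nat \<Rightarrow> nat \<Rightarrow> 'a)
                   \<Rightarrow> (nat \<times> nat \<Rightarrow> 'a) \<Rightarrow> nat \<Rightarrow> nat \<Rightarrow> nat \<Rightarrow> 'a" where
  "ystate m n A b r j s = rstate (pairs n) (\<lambda>i. bin m n A b r j i j) (\<lambda>s. r (j, s)) s"

definition xcol :: "nat \<Rightarrow> nat \<Rightarrow> (nat \<Rightarrow> nat \<Rightarrow> nat \<Rightarrow> 'a::field) \<Rightarrow> (nat \<Rightarrow> nat \<Rightarrow> 'a)
                   \<Rightarrow> (nat \<times> nat \<Rightarrow> 'a) \<Rightarrow> nat \<Rightarrow> 'a" where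
  "xcol m n A b r j = fulladd n (\<lambda>i. bin m n A b r j i j) (\<lambda>s. r (j, s))"

definition sbs_out :: "nat \<Rightarrow> nat \<Rightarrow> (nat \<Rightarrow> nat \<Rightarrow> nat \<Rightarrow> 'a::field) \<Rightarrow> (nat \<Rightarrow> nat \<Rightarrow> 'a)
                   \<Rightarrow> (nat \<times> nat \<Rightarrow> 'a) \<Rightarrow> 'a list" where
  "sbs_out m n A b r = map (xcol m n A b r) [0..<m]"

datatype wire =
    WA nat nat nat   \<comment> \<open>WA i k j: input share A[k,j]_i\<close>
  | WB nat nat nat   \<comment> \<open>WB j i k: b[k]_i at the start of the iteration for column j
                        (WB (m-1) is the input sharing of b; every updated b[k]_i appears)\<close>
  | WR nat nat       \<comment> \<open>WR j s: random r sampled in step s of StrongRefresh of column j\<close>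
  | WY nat nat nat   \<comment> \<open>WY j s i: y_i after s steps of StrongRefresh of column j
                        (s = 0: b[j]_i; s = npairs n: the refreshed share a_i)\<close>
  | WS nat nat       \<comment> \<open>WS j k: partial sum a_0 + ... + a_(k-1) in FullAdd of column j
                        (k = n gives x[j])\<close>
  | WP nat nat nat   \<comment> \<open>WP j k i: product x[j] * A[k,j]_i\<close>

fun wval :: "nat \<Rightarrow> nat \<Rightarrow> (nat \<Rightarrow> nat \<Rightarrow> nat \<Rightarrow> 'a::field) \<Rightarrow> (nat \<Rightarrow> nat \<Rightarrow> 'a)
               \<Rightarrow> (nat \<times> nat \<Rightarrow> 'a) \<Rightarrow> wire \<Rightarrow> 'a" where
  "wval m n A b r (WA i k j) = A i k j"
| "wval m n A b r (WB j i k) = bin m n A b r j i k"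
| "wval m n A b r (WR j s) = r (j, s)"
| "wval m n A b r (WY j s i) = ystate m n A b r j s i"
| "wval m n A b r (WS j k) = (\<Sum>i<k. ystate m n A b r j (npairs n) i)"
| "wval m n A b r (WP j k i) = xcol m n A b r j * A i k j"

definition wires :: "nat \<Rightarrow> nat \<Rightarrow> wire set" where
  "wires m n =
     {WA i k j | i k j. i < n \<and> k < m \<and> j < m}
   \<union> {WB j i k | j i k. j < m \<and> i < n \<and> k < m}
   \<union> {WR j s | j s. j < m \<and> s < npairs n}
   \<union> {WY j s i | j s i. j < m \<and> s \<le> npairs n \<and> i < n}
   \<union> {WS j k | j k. j < m \<and> 1 \<le> k \<and> k \<le> n}
   \<union> {WP j k i | j k i. j < m \<and> k < j \<and> i < n}"

definition rand_dom :: "nat \<Rightarrow> nat \<Rightarrow> (nat \<times> nat) set" where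
  "rand_dom m n = {(j, s). j < m \<and> s < npairs n}"

definition rand :: "nat \<Rightarrow> nat \<Rightarrow> (nat \<times> nat \<Rightarrow> 'a::finite) pmf" where
  "rand m n = pmf_of_set (PiE (rand_dom m n) (\<lambda>_. UNIV))"

definition restrA :: "nat \<Rightarrow> nat set \<Rightarrow> (nat \<Rightarrow> nat \<Rightarrow> nat \<Rightarrow> 'a::zero) \<Rightarrow> (nat \<Rightarrow> nat \<Rightarrow> nat \<Rightarrow> 'a)" where
  "restrA m I A = (\<lambda>i k j. if i \<in> I \<and> k < m \<and> j < m then A i k j else 0)"

definition restrB :: "nat \<Rightarrow> nat set \<Rightarrow> (nat \<Rightarrow> nat \<Rightarrow> 'a::zero) \<Rightarrow> (nat \<Rightarrow> nat \<Rightarrow> 'a)" where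
  "restrB m I b = (\<lambda>i k. if i \<in> I \<and> k < m then b i k else 0)"

text \<open>The joint distribution of
  (probed wire values, public output) must equal: draw the output, then run a simulator that
  only sees t1 = card P shares of each input sharing and the output.  (Since the output is
  deterministic, this is the usual "simulate using t1 shares and the value of x".)\<close>
definition SecBackSub_NIo :: "'a::{finite,field} itself \<Rightarrow> nat \<Rightarrow> nat \<Rightarrow> nat \<Rightarrow> bool" where
  "SecBackSub_NIo _ m n t \<longleftrightarrow>
    (\<forall>P. P \<subseteq> wires m n \<and> card P \<le> t \<longrightarrow>
      (\<exists>IA IB (sim :: (nat \<Rightarrow> nat \<Rightarrow> nat \<Rightarrow> 'a) \<Rightarrow> (nat \<Rightarrow> nat \<Rightarrow> 'a) \<Rightarrow> 'a list \<Rightarrow> (wire \<Rightarrow> 'a) pmf).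
         IA \<subseteq> {..<n} \<and> IB \<subseteq> {..<n} \<and> card IA \<le> card P \<and> card IB \<le> card P \<and>
         (\<forall>(A :: nat \<Rightarrow> nat \<Rightarrow> nat \<Rightarrow> 'a) (b :: nat \<Rightarrow> nat \<Rightarrow> 'a).
            map_pmf (\<lambda>r. (restrict (wval m n A b r) P, sbs_out m n A b r)) (rand m n)
          = bind_pmf (map_pmf (sbs_out m n A b) (rand m n))
              (\<lambda>x. map_pmf (\<lambda>v. (v, x)) (sim (restrA m IA A) (restrB m IB b) x)))))"

end

theory Submission
  imports Defs
begin

(* Let I be the set of share indices read by the probes; as there are at most t of them, some
   hub index h < t + 1 lies outside I.  Two inputs that agree on the shares in I and have the
   same public output x give the same probe distribution: in each column j their b-shares differ
   by a sharing d of 0 that vanishes on I, and shifting the randomness of every StrongRefresh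
   step on a pair through h (by hub_rand) moves all of d into the share h, where it cancels.
   The shift is a bijection of the uniform randomness, so the simulator may run the gadget on
   any input consistent with the shares in I and with x. *)

lemma set_pairs: "set (pairs n) = {(a, a'). a < a' \<and> a' < n}"
  unfolding pairs_def by (auto simp: image_iff)

lemma distinct_pairs: "distinct (pairs n)"
proof -
  have "distinct (concat (map (\<lambda>i. map (Pair i) (g i)) xs))"
    if "distinct xs" "\<And>i. distinct (g i)" for xs :: "nat list" and g :: "nat \<Rightarrow> nat list"
    using that by (induction xs) (auto simp: distinct_map inj_on_def)
  then show ?thesis unfolding pairs_def by simp
qed

lemma nth_pairs_less:
  "s < npairs n \<Longrightarrow> fst (pairs n ! s) < snd (pairs n ! s) \<and> snd (pairs n ! s) < n"
  using nth_mem[of s "pairs n"] set_pairs[of n] unfolding npairs_def by auto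

lemma sum_rstate:
  assumes "\<And>p. p \<in> set ps \<Longrightarrow> fst p < n \<and> snd p < n \<and> fst p \<noteq> snd p"
    and "s \<le> length ps"
  shows "(\<Sum>i<n. rstate ps y r s i) = (\<Sum>i<n. y i)"
  using assms(2)
proof (induction s)
  case (Suc s)
  obtain a a' where p: "ps ! s = (a, a')" by fastforce
  have aa: "a < n" "a' < n" "a \<noteq> a'"
    using assms(1)[OF nth_mem] Suc.prems p by (metis Suc_le_lessD fst_conv snd_conv)+
  have "(\<Sum>i<n. rstate ps y r (Suc s) i)
      = (\<Sum>i<n. rstate ps y r s i + (if i = a then r s else 0) - (if i = a' then r s else 0))"
    by (intro sum.cong) (auto simp: p Let_def aa)
  also have "\<dots> = (\<Sum>i<n. rstate ps y r s i)"
    by (simp add: sum.distrib sum_subtractf aa)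
  finally show ?case using Suc by simp
qed simp

lemma sum_rstate_pairs:
  "s \<le> npairs n \<Longrightarrow> (\<Sum>i<n. rstate (pairs n) y r s i) = (\<Sum>i<n. y i)"
  by (rule sum_rstate) (auto simp: set_pairs npairs_def)

lemma fulladd_eq_sum: "fulladd n y r = (\<Sum>i<n. y i)"
  unfolding fulladd_def by (simp add: sum_rstate_pairs)

lemma rstate_add:
  "rstate ps (\<lambda>i. y i + y' i) (\<lambda>s. r s + r' s) s i = rstate ps y r s i + rstate ps y' r' s i"
  by (induction s arbitrary: i) (auto simp: Let_def algebra_simps)

lemma rstate_cong: "(\<And>s'. s' < s \<Longrightarrow> r s' = r' s') \<Longrightarrow> rstate ps y r s = rstate ps y r' s"
  by (induction s) (auto simp: Let_def)

lemma rstate_eq_sum: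
  assumes "\<And>p. p \<in> set ps \<Longrightarrow> fst p \<noteq> snd p"
  shows "rstate ps y (\<lambda>s. \<rho> (ps ! s)) (length ps) i
       = y i + (\<Sum>p\<leftarrow>ps. (if fst p = i then \<rho> p else 0) - (if snd p = i then \<rho> p else 0))"
proof -
  have "rstate ps y (\<lambda>s. \<rho> (ps ! s)) s i
      = y i + (\<Sum>p\<leftarrow>take s ps. (if fst p = i then \<rho> p else 0) - (if snd p = i then \<rho> p else 0))"
    if "s \<le> length ps" for s
    using that
  proof (induction s)
    case (Suc s)
    obtain a a' where p: "ps ! s = (a, a')" by fastforce
    have "a \<noteq> a'" using assms[OF nth_mem] Suc.prems p by (metis Suc_le_lessD fst_conv snd_conv)
    then show ?case using Suc by (auto simp: p Let_def take_Suc_conv_app_nth)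
  qed simp
  then show ?thesis by simp
qed

(* Step (a, a') of StrongRefresh adds its random to share a and subtracts it from share a';
   these values cancel d on every share other than h. *)
definition hub_rand :: "nat \<Rightarrow> (nat \<Rightarrow> 'a::ab_group_add) \<Rightarrow> nat \<times> nat \<Rightarrow> 'a" where
  "hub_rand h d p = (if snd p = h then - d (fst p) else if fst p = h then d (snd p) else 0)"

lemma rstate_hub_rand_off_hub:
  "d i = 0 \<Longrightarrow> i \<noteq> h \<Longrightarrow> rstate ps d (\<lambda>s. hub_rand h d (ps ! s)) s i = 0"
  by (induction s) (auto simp: Let_def hub_rand_def)

lemma rstate_hub_rand_final:
  fixes d :: "nat \<Rightarrow> 'a::ab_group_add"
  assumes "h < n" and "i < n" and "(\<Sum>i<n. d i) = 0"
  shows "rstate (pairs n) d (\<lambda>s. hub_rand h d (pairs n ! s)) (npairs n) i = 0"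
proof -
  let ?y = "rstate (pairs n) d (\<lambda>s. hub_rand h d (pairs n ! s)) (npairs n)"
  have off_hub: "?y i' = 0" if "i' < n" "i' \<noteq> h" for i'
  proof -
    have "?y i' = d i' + (\<Sum>p\<leftarrow>pairs n.
        (if p = (i', h) then - d i' else 0) + (if p = (h, i') then - d i' else 0))"
      unfolding npairs_def
      by (subst rstate_eq_sum)
        (auto simp: set_pairs hub_rand_def \<open>i' \<noteq> h\<close> intro!: arg_cong[where f = sum_list])
    also have "\<dots> = 0"
      unfolding sum_list_distinct_conv_sum_set[OF distinct_pairs] sum.distrib sum.delta[OF finite_set]
      using that \<open>h < n\<close> by (auto simp: set_pairs)
    finally show ?thesis .
  qed
  have "(\<Sum>i<n. ?y i) = 0"
    using sum_rstate_pairs[of "npairs n" n d "\<lambda>s. hub_rand h d (pairs n ! s)"] assms(3) by simp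
  moreover have "(\<Sum>i<n. ?y i) = ?y h"
    using off_hub \<open>h < n\<close> by (subst sum.remove[of _ h]) auto
  ultimately show ?thesis using off_hub \<open>i < n\<close> by (cases "i = h") auto
qed

lemma bst_indep_rand: "bst m n A b r st = bst m n A b r' st"
  by (induction st) (simp_all add: Let_def fulladd_eq_sum)

lemma bin_indep_rand: "bin m n A b r = bin m n A b r'"
  unfolding bin_def by (rule ext bst_indep_rand)+

lemma xcol_eq_sum: "xcol m n A b r j = (\<Sum>i<n. bin m n A b r j i j)"
  unfolding xcol_def by (simp add: fulladd_eq_sum)

lemma xcol_indep_rand: "xcol m n A b r j = xcol m n A b r' j"
  unfolding xcol_eq_sum by (simp add: bin_indep_rand[of m n A b r r'])

lemma sbs_out_indep_rand: "sbs_out m n A b r = sbs_out m n A b r'"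
  unfolding sbs_out_def by (simp add: xcol_indep_rand[of m n A b r _ r'])

lemma bst_eq_on_share:
  assumes b: "\<And>k. k < m \<Longrightarrow> b i k = b0 i k"
    and A: "\<And>k j. k < m \<Longrightarrow> j < m \<Longrightarrow> A i k j = A0 i k j"
    and x: "\<And>j. j < m \<Longrightarrow> xcol m n A b r j = xcol m n A0 b0 r0 j"
    and "st \<le> m" and "k < m"
  shows "bst m n A b r st i k = bst m n A0 b0 r0 st i k"
  using assms(4,5)
proof (induction st arbitrary: k)
  case 0
  then show ?case using b by simp
next
  case (Suc st)
  let ?j = "m - Suc st"
  have "fulladd n (\<lambda>i. bst m n A b r st i ?j) (\<lambda>s. r (?j, s)) = xcol m n A b r ?j"
    and "fulladd n (\<lambda>i. bst m n A0 b0 r0 st i ?j) (\<lambda>s. r0 (?j, s)) = xcol m n A0 b0 r0 ?j"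
    unfolding xcol_def bin_def using Suc.prems by (simp_all add: Suc_diff_Suc)
  moreover have "xcol m n A b r ?j = xcol m n A0 b0 r0 ?j" and "A i k ?j = A0 i k ?j"
    using x A Suc.prems by auto
  moreover have "bst m n A b r st i k = bst m n A0 b0 r0 st i k"
    using Suc by simp
  ultimately show ?case by (simp add: Let_def)
qed

fun share_of :: "nat \<Rightarrow> wire \<Rightarrow> nat" where
  "share_of n (WA i k j) = i"
| "share_of n (WB j i k) = i"
| "share_of n (WR j s) = fst (pairs n ! s)"
| "share_of n (WY j s i) = i"
| "share_of n (WS j k) = 0"  \<comment> \<open>arbitrary: partial sums of refreshed shares reveal no share\<close>
| "share_of n (WP j k i) = i"

lemma share_of_less: "w \<in> wires m n \<Longrightarrow> 0 < n \<Longrightarrow> share_of n w < n"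
  by (auto simp: wires_def) (metis nth_pairs_less order.strict_trans)

lemma finite_wires: "finite (wires m n)"
proof -
  have "wires m n \<subseteq> (\<lambda>(i, k, j). WA i k j) ` ({..<n} \<times> {..<m} \<times> {..<m})
    \<union> (\<lambda>(j, i, k). WB j i k) ` ({..<m} \<times> {..<n} \<times> {..<m})
    \<union> (\<lambda>(j, s). WR j s) ` ({..<m} \<times> {..<npairs n})
    \<union> (\<lambda>(j, s, i). WY j s i) ` ({..<m} \<times> {..npairs n} \<times> {..<n})
    \<union> (\<lambda>(j, k). WS j k) ` ({..<m} \<times> {..n})
    \<union> (\<lambda>(j, k, i). WP j k i) ` ({..<m} \<times> {..<m} \<times> {..<n})"
    unfolding wires_def by (auto simp: image_iff)
  then show ?thesis by (rule finite_subset) auto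
qed

lemma unprobed_share_exists:
  assumes "P \<subseteq> wires m n" and "card P < n"
  obtains h where "h < n" and "h \<notin> share_of n ` P"
proof -
  have "share_of n ` P \<subseteq> {..<n}" using assms share_of_less by fastforce
  moreover have "card (share_of n ` P) < card {..<n}"
    using card_image_le[OF finite_subset[OF assms(1) finite_wires], of "share_of n"] assms(2)
    by simp
  ultimately have "share_of n ` P \<subset> {..<n}"
    by (intro card_psubset) simp_all
  then show ?thesis using that by auto
qed

lemma map_pmf_add_uniform_PiE:
  fixes c :: "'b \<Rightarrow> 'a::{finite,group_add}"
  assumes "finite D" and "\<And>p. p \<notin> D \<Longrightarrow> c p = 0"
  shows "map_pmf (\<lambda>r p. r p + c p) (pmf_of_set (PiE D (\<lambda>_. UNIV)))
       = pmf_of_set (PiE D (\<lambda>_. UNIV))"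
proof (rule map_pmf_of_set_bij_betw)
  show "bij_betw (\<lambda>r p. r p + c p) (PiE D (\<lambda>_. UNIV)) (PiE D (\<lambda>_. UNIV))"
    by (rule bij_betwI[where g = "\<lambda>r p. r p - c p"])
      (use assms in \<open>auto simp: PiE_iff extensional_def\<close>)
qed (use assms in \<open>auto simp: finite_PiE PiE_eq_empty_iff\<close>)

context
  fixes m n :: nat and I :: "nat set" and h :: nat
    and A A0 :: "nat \<Rightarrow> nat \<Rightarrow> nat \<Rightarrow> 'a::{finite,field}" and b b0 :: "nat \<Rightarrow> nat \<Rightarrow> 'a"
  assumes restrA_eq: "restrA m I A = restrA m I A0"
    and restrB_eq: "restrB m I b = restrB m I b0"
    and sbs_out_eq: "sbs_out m n A b = sbs_out m n A0 b0"
    and hub: "h < n" "h \<notin> I"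
begin

definition col_diff :: "nat \<Rightarrow> nat \<Rightarrow> 'a" where
  "col_diff j i = bin m n A b (\<lambda>_. 0) j i j - bin m n A0 b0 (\<lambda>_. 0) j i j"

definition rand_shift :: "nat \<times> nat \<Rightarrow> 'a" where
  "rand_shift p =
     (if p \<in> rand_dom m n then hub_rand h (col_diff (fst p)) (pairs n ! snd p) else 0)"

lemma xcol_eq: "j < m \<Longrightarrow> xcol m n A b r j = xcol m n A0 b0 r' j"
  using fun_cong[OF sbs_out_eq, of r] xcol_indep_rand[of m n A0 b0 r j r']
  by (simp add: sbs_out_def)

lemma A_eq_on_I: "i \<in> I \<Longrightarrow> k < m \<Longrightarrow> j < m \<Longrightarrow> A i k j = A0 i k j"
  using fun_cong[OF fun_cong[OF fun_cong[OF restrA_eq, of i], of k], of j] by (simp add: restrA_def)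

lemma b_eq_on_I: "i \<in> I \<Longrightarrow> k < m \<Longrightarrow> b i k = b0 i k"
  using fun_cong[OF fun_cong[OF restrB_eq, of i], of k] by (simp add: restrB_def)

lemma bin_eq_on_I:
  "i \<in> I \<Longrightarrow> j < m \<Longrightarrow> k < m \<Longrightarrow> bin m n A b r j i k = bin m n A0 b0 r' j i k"
  unfolding bin_def by (rule bst_eq_on_share) (auto simp: A_eq_on_I b_eq_on_I xcol_eq)

lemma col_diff_on_I: "i \<in> I \<Longrightarrow> j < m \<Longrightarrow> col_diff j i = 0"
  by (simp add: col_diff_def bin_eq_on_I)

lemma sum_col_diff: "j < m \<Longrightarrow> (\<Sum>i<n. col_diff j i) = 0"
  using xcol_eq[of j "\<lambda>_. 0" "\<lambda>_. 0"] by (simp add: col_diff_def sum_subtractf xcol_eq_sum)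

lemma ystate_shift:
  assumes "j < m" and "s \<le> npairs n"
  shows "ystate m n A b (\<lambda>p. r p + rand_shift p) j s i
       = ystate m n A0 b0 r j s i
         + rstate (pairs n) (col_diff j) (\<lambda>s. hub_rand h (col_diff j) (pairs n ! s)) s i"
proof -
  have "bin m n A b r' j i j = bin m n A0 b0 r j i j + col_diff j i" for r' i
    by (simp add: col_diff_def bin_indep_rand[of m n A b r' "\<lambda>_. 0"]
        bin_indep_rand[of m n A0 b0 r "\<lambda>_. 0"])
  then have "ystate m n A b (\<lambda>p. r p + rand_shift p) j s i
      = ystate m n A0 b0 r j s i + rstate (pairs n) (col_diff j) (\<lambda>s. rand_shift (j, s)) s i"
    unfolding ystate_def by (simp add: rstate_add[symmetric])
  also have "rstate (pairs n) (col_diff j) (\<lambda>s. rand_shift (j, s)) s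
      = rstate (pairs n) (col_diff j) (\<lambda>s. hub_rand h (col_diff j) (pairs n ! s)) s"
    by (rule rstate_cong) (use assms in \<open>auto simp: rand_shift_def rand_dom_def\<close>)
  finally show ?thesis .
qed

lemma wval_shift:
  assumes w: "w \<in> wires m n" and share: "share_of n w \<in> I"
  shows "wval m n A b (\<lambda>p. r p + rand_shift p) w = wval m n A0 b0 r w"
proof (cases w)
  case (WA i k j)
  then show ?thesis using w share by (auto simp: wires_def A_eq_on_I)
next
  case (WB j i k)
  then show ?thesis using w share by (auto simp: wires_def bin_eq_on_I)
next
  case (WR j s)
  then have "(j, s) \<in> rand_dom m n" "fst (pairs n ! s) \<in> I"
    using w share by (auto simp: wires_def rand_dom_def)
  then have "rand_shift (j, s) = 0"
    using hub col_diff_on_I by (auto simp: rand_shift_def hub_rand_def rand_dom_def)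
  then show ?thesis using WR by simp
next
  case (WY j s i)
  then have "j < m" "s \<le> npairs n" "i \<in> I" using w share by (auto simp: wires_def)
  moreover have "i \<noteq> h" using hub \<open>i \<in> I\<close> by auto
  ultimately show ?thesis
    using WY by (simp add: ystate_shift rstate_hub_rand_off_hub col_diff_on_I)
next
  case (WS j k)
  then have "j < m" "k \<le> n" using w by (auto simp: wires_def)
  then have "ystate m n A b (\<lambda>p. r p + rand_shift p) j (npairs n) i = ystate m n A0 b0 r j (npairs n) i"
    if "i < k" for i
    using that hub by (simp add: ystate_shift rstate_hub_rand_final sum_col_diff)
  then show ?thesis using WS by (auto intro: sum.cong)
next
  case (WP j k i)
  then show ?thesis using w share by (auto simp: wires_def A_eq_on_I xcol_eq)
qed

lemma probes_indist:
  assumes "P \<subseteq> wires m n" and "share_of n ` P \<subseteq> I"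
  shows "map_pmf (\<lambda>r. restrict (wval m n A b r) P) (rand m n)
       = map_pmf (\<lambda>r. restrict (wval m n A0 b0 r) P) (rand m n)"
proof -
  have shift: "map_pmf (\<lambda>r p. r p + rand_shift p) (rand m n) = rand m n"
    unfolding rand_def
    by (rule map_pmf_add_uniform_PiE) (auto simp: rand_dom_def rand_shift_def)
  have "map_pmf (\<lambda>r. restrict (wval m n A b r) P) (rand m n)
      = map_pmf (\<lambda>r. restrict (wval m n A b r) P)
          (map_pmf (\<lambda>r p. r p + rand_shift p) (rand m n))"
    by (simp only: shift)
  also have "\<dots> = map_pmf (\<lambda>r. restrict (wval m n A0 b0 r) P) (rand m n)"
    unfolding pmf.map_comp o_def using assms
    by (intro pmf.map_cong refl ext) (simp add: restrict_def wval_shift subset_iff image_subset_iff)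
  finally show ?thesis .
qed

end

lemma SecBackSub_NIoI:
  fixes I :: "wire set \<Rightarrow> nat set"
  assumes I_bound:
      "\<And>P. P \<subseteq> wires m n \<Longrightarrow> card P \<le> t \<Longrightarrow> I P \<subseteq> {..<n} \<and> card (I P) \<le> card P"
    and indist: "\<And>P (A :: nat \<Rightarrow> nat \<Rightarrow> nat \<Rightarrow> 'a::{finite,field}) A0 b b0.
      P \<subseteq> wires m n \<Longrightarrow> card P \<le> t \<Longrightarrow>
      restrA m (I P) A = restrA m (I P) A0 \<Longrightarrow> restrB m (I P) b = restrB m (I P) b0 \<Longrightarrow>
      sbs_out m n A b = sbs_out m n A0 b0 \<Longrightarrow>
      map_pmf (\<lambda>r. restrict (wval m n A b r) P) (rand m n)
        = map_pmf (\<lambda>r. restrict (wval m n A0 b0 r) P) (rand m n)"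
  shows "SecBackSub_NIo TYPE('a) m n t"
proof -
  define consistent where "consistent P rA rB x AB \<longleftrightarrow> restrA m (I P) (fst AB) = rA
    \<and> restrB m (I P) (snd AB) = rB \<and> sbs_out m n (fst AB) (snd AB) = (\<lambda>_. x)"
    for P rA rB x and AB :: "(nat \<Rightarrow> nat \<Rightarrow> nat \<Rightarrow> 'a) \<times> (nat \<Rightarrow> nat \<Rightarrow> 'a)"
  define sim where "sim P rA rB x = (let AB = Eps (consistent P rA rB x)
    in map_pmf (\<lambda>r. restrict (wval m n (fst AB) (snd AB) r) P) (rand m n))" for P rA rB x
  have sim_correct: "map_pmf (\<lambda>r. (restrict (wval m n A b r) P, sbs_out m n A b r)) (rand m n)
      = bind_pmf (map_pmf (sbs_out m n A b) (rand m n))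
          (\<lambda>x. map_pmf (\<lambda>v. (v, x)) (sim P (restrA m (I P) A) (restrB m (I P) b) x))"
    if P: "P \<subseteq> wires m n" "card P \<le> t" for P A b
  proof -
    define x where "x = sbs_out m n A b undefined"
    have out: "sbs_out m n A b = (\<lambda>_. x)"
      unfolding x_def by (rule ext sbs_out_indep_rand)+
    define AB where "AB = Eps (consistent P (restrA m (I P) A) (restrB m (I P) b) x)"
    have "consistent P (restrA m (I P) A) (restrB m (I P) b) x AB"
      unfolding AB_def by (rule someI[of _ "(A, b)"]) (simp add: consistent_def out)
    then have sim_eq: "sim P (restrA m (I P) A) (restrB m (I P) b) x
        = map_pmf (\<lambda>r. restrict (wval m n A b r) P) (rand m n)"
      unfolding sim_def AB_def[symmetric] Let_def consistent_def using out
      by (intro indist[symmetric] P) auto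
    show ?thesis
      unfolding out map_pmf_const bind_return_pmf sim_eq by (simp add: pmf.map_comp o_def)
  qed
  show ?thesis
    unfolding SecBackSub_NIo_def
  proof (intro allI impI, elim conjE)
    fix P assume P: "P \<subseteq> wires m n" "card P \<le> t"
    show "\<exists>IA IB sim. IA \<subseteq> {..<n} \<and> IB \<subseteq> {..<n} \<and>
      card IA \<le> card P \<and> card IB \<le> card P \<and>
      (\<forall>(A :: nat \<Rightarrow> nat \<Rightarrow> nat \<Rightarrow> 'a) b.
         map_pmf (\<lambda>r. (restrict (wval m n A b r) P, sbs_out m n A b r)) (rand m n)
       = bind_pmf (map_pmf (sbs_out m n A b) (rand m n))
           (\<lambda>x. map_pmf (\<lambda>v. (v, x)) (sim (restrA m IA A) (restrB m IB b) x)))"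
      using I_bound[OF P] sim_correct[OF P]
      by (intro exI[of _ "I P"] exI[of _ "sim P"] conjI allI) auto
  qed
qed

theorem lemma6:
  fixes t m :: nat
  assumes "t \<ge> 1"
  shows "SecBackSub_NIo TYPE('a::{finite,field}) m (t + 1) t"
proof (rule SecBackSub_NIoI[where I = "\<lambda>P. share_of (t + 1) ` P"])
  fix P assume P: "P \<subseteq> wires m (t + 1)" "card P \<le> t"
  show "share_of (t + 1) ` P \<subseteq> {..<t + 1} \<and> card (share_of (t + 1) ` P) \<le> card P"
  proof
    show "share_of (t + 1) ` P \<subseteq> {..<t + 1}" using P(1) share_of_less by fastforce
    show "card (share_of (t + 1) ` P) \<le> card P"
      using finite_subset[OF P(1) finite_wires] by (rule card_image_le)
  qed
next
  fix P and A A0 :: "nat \<Rightarrow> nat \<Rightarrow> nat \<Rightarrow> 'a" and b b0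
  assume P: "P \<subseteq> wires m (t + 1)" "card P \<le> t"
    and agree: "restrA m (share_of (t + 1) ` P) A = restrA m (share_of (t + 1) ` P) A0"
      "restrB m (share_of (t + 1) ` P) b = restrB m (share_of (t + 1) ` P) b0"
      "sbs_out m (t + 1) A b = sbs_out m (t + 1) A0 b0"
  \<comment> \<open>only card P < t + 1 is used here\<close>
  obtain h where h: "h < t + 1" "h \<notin> share_of (t + 1) ` P"
    using P(2) by (auto intro: unprobed_share_exists[OF P(1)])
  show "map_pmf (\<lambda>r. restrict (wval m (t + 1) A b r) P) (rand m (t + 1))
      = map_pmf (\<lambda>r. restrict (wval m (t + 1) A0 b0 r) P) (rand m (t + 1))"
    using agree h P(1) by (rule probes_indist) simp
qed

end
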